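(* There is no Steiner triple system of order $v>3$ whose $2$-rank is less than $v$ and whose $3$-rank is less than $v-1$.
   Context: A Steiner triple system of order $v$ on $\{1,\ldots,v\}$ is a collection of 3-subsets (blocks) such that every 2-subset is contained in exactly one block. For a prime $p$, the $p$-rank of such a system is the dimension of the $\mathrm{GF}(p)$-linear span of the characteristic vectors of its blocks in $\mathrm{GF}(p)^v$. *)

theory Defs
  imports "HOL-Analysis.Analysis"
begin

text \<open>A Steiner triple system on the point set UNIV of a finite type 'n
  (so its order is CARD('n)): a collection of 3-subsets (blocks) such that
  every 2-subset of points is contained in exactly one block.\<close>
definition steiner_triple_system :: "'n::finite set set \<Rightarrow> bool" where
  "steiner_triple_system B \<longleftrightarrow>
     (\<forall>b\<in>B. card b = 3) \<and>
     (\<forall>x y. x \<noteq> y \<longrightarrow> (\<exists>!b. b \<in> B \<and> {x, y} \<subseteq> b))"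

definition char_vec :: "'n::finite set \<Rightarrow> 'f::field ^ 'n" where
  "char_vec b = (\<chi> i. if i \<in> b then 1 else 0)"

text \<open>Rank over the field 'f: dimension of the 'f-linear span of the
  characteristic vectors of the blocks in 'f^n.  For a field 'f with
  CARD('f) = p prime, 'f is GF(p) and this is the p-rank.\<close>
definition rank_over :: "'f::field itself \<Rightarrow> 'n::finite set set \<Rightarrow> nat" where
  "rank_over F B = vec.dim ((char_vec :: 'n set \<Rightarrow> 'f ^ 'n) ` B)"

end

(*
  A nonzero vector over GF(2) orthogonal to all blocks is the indicator of a nonempty set S
  meeting every block in an even number of points.  A vector over GF(3) orthogonal to all blocks
  and vanishing at one point is a non-constant colouring with three colours in which every block
  is monochromatic or rainbow; its colour classes are subsystems.  For a fixed point p, the map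
  y \<mapsto> (third point of the block through p and y) is an involution, and pairing points with it
  shows: |S| = |-S| + 1, the same holds inside every subsystem meeting S, and the three colour
  classes have a common size m.  Summing over the classes, j - (3 - j) m = 1 where j classes
  meet S, so j = 2 and m = 1, i.e. v = 3.
*)

theory Submission
  imports Defs "HOL-Number_Theory.Residues"
begin

lemma vec_dim_Un_le:
  fixes A C :: "('f::field ^ 'n) set"
  assumes "finite C"
  shows "vec.dim (A \<union> C) \<le> vec.dim A + card C"
  using assms
proof (induction C rule: finite_induct)
  case (insert c C)
  have "vec.dim (A \<union> insert c C) \<le> vec.dim (A \<union> C) + 1"
    by (simp add: vec.dim_insert)
  with insert show ?case
    by simp
qed simp

lemma exists_linear_vanishing_on_span:
  fixes A :: "('f::field ^ 'n) set"
  assumes "e \<notin> vec.span A"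
  obtains L :: "'f ^ 'n \<Rightarrow> 'f ^ 'n"
  where "Vector_Spaces.linear (*s) (*s) L" "\<And>a. a \<in> vec.span A \<Longrightarrow> L a = 0" "L e \<noteq> 0"
proof -
  obtain C where C: "C \<subseteq> vec.span A" "vec.independent C" "vec.span A \<subseteq> vec.span C"
    using vec.maximal_independent_subset by blast
  have "vec.span C \<subseteq> vec.span A"
    using C(1) vec.span_minimal vec.subspace_span by blast
  with assms C(2) have indep: "vec.independent (insert e C)"
    using vec.span_base by (auto simp: vec.independent_insert)
  define L :: "'f ^ 'n \<Rightarrow> 'f ^ 'n"
    where "L = vec.construct (insert e C) (\<lambda>b. if b = e then 1 else 0)"
  have lin: "Vector_Spaces.linear (*s) (*s) L"
    unfolding L_def using indep by (rule vec.linear_construct)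
  show thesis
  proof
    show "Vector_Spaces.linear (*s) (*s) L"
      by (fact lin)
    show "L e \<noteq> 0"
      unfolding L_def by (simp add: vec.construct_basis[OF indep] vec_eq_iff)
    fix a assume "a \<in> vec.span A"
    then have "a \<in> vec.span C"
      using C(3) by blast
    moreover have "L c = 0" if "c \<in> C" for c
      using that assms C(1) unfolding L_def by (auto simp: vec.construct_basis[OF indep])
    ultimately show "L a = 0"
      using vec.linear_eq_0_on_span[OF lin] by blast
  qed
qed

lemma exists_nonzero_orthogonal:
  fixes A :: "('f::field ^ 'n) set"
  assumes "vec.dim A < CARD('n)"
  obtains x :: "'f ^ 'n" where "x \<noteq> 0" "\<And>a. a \<in> A \<Longrightarrow> (\<Sum>i\<in>UNIV. a $ i * x $ i) = 0"
proof -
  have "vec.span A \<noteq> UNIV"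
    by (metis assms vec.dim_span vec_dim_card less_irrefl)
  then obtain e where "e \<notin> vec.span A"
    by blast
  then obtain L :: "'f ^ 'n \<Rightarrow> 'f ^ 'n" where L: "Vector_Spaces.linear (*s) (*s) L"
    "\<And>a. a \<in> vec.span A \<Longrightarrow> L a = 0" "L e \<noteq> 0"
    using exists_linear_vanishing_on_span by metis
  then obtain j where "L e $ j \<noteq> 0"
    by (metis vec_eq_iff zero_index)
  define x where "x = (\<chi> i. L (axis i 1) $ j)"
  have L_component: "L y $ j = (\<Sum>i\<in>UNIV. y $ i * x $ i)" for y
    using linear_componentwise[OF L(1), of y j] by (simp add: x_def)
  show thesis
  proof
    show "x \<noteq> 0"
      using L_component[of e] \<open>L e $ j \<noteq> 0\<close> by auto
    show "(\<Sum>i\<in>UNIV. a $ i * x $ i) = 0" if "a \<in> A" for a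
      using L_component[of a] L(2) vec.span_base[OF that] by simp
  qed
qed

lemma sum_char_vec_mult:
  fixes x :: "'f::field ^ 'n"
  shows "(\<Sum>i\<in>UNIV. char_vec b $ i * x $ i) = (\<Sum>i\<in>b. x $ i)"
  by (simp add: char_vec_def mult_if_delta sum.If_cases)

lemma sum_axis_mult:
  fixes x :: "'f::field ^ 'n"
  shows "(\<Sum>i\<in>UNIV. axis k 1 $ i * x $ i) = x $ k"
  by (simp add: axis_def mult_if_delta)

lemma rank_over_less_obtain_orthogonal:
  fixes B :: "'n::finite set set" and P :: "'n set"
  assumes "rank_over TYPE('f::field) B + card P < CARD('n)"
  obtains x :: "'f::field ^ 'n" where "x \<noteq> 0" "\<And>i. i \<in> P \<Longrightarrow> x $ i = 0"
    "\<And>b. b \<in> B \<Longrightarrow> (\<Sum>i\<in>b. x $ i) = 0"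
proof -
  let ?A = "char_vec ` B \<union> (\<lambda>i. axis i 1) ` P :: ('f ^ 'n) set"
  have "vec.dim ?A \<le> vec.dim (char_vec ` B :: ('f ^ 'n) set) + card ((\<lambda>i. axis i 1 :: 'f ^ 'n) ` P)"
    by (rule vec_dim_Un_le) simp
  also have "\<dots> \<le> rank_over TYPE('f) B + card P"
    unfolding rank_over_def using card_image_le[of P "\<lambda>i. axis i 1 :: 'f ^ 'n"] by simp
  finally have "vec.dim ?A < CARD('n)"
    using assms by linarith
  then obtain x :: "'f ^ 'n" where x: "x \<noteq> 0" and orth: "\<And>a. a \<in> ?A \<Longrightarrow> (\<Sum>i\<in>UNIV. a $ i * x $ i) = 0"
    using exists_nonzero_orthogonal by metis
  show thesis
  proof (rule that)
    show "x \<noteq> 0"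
      by (fact x)
    show "x $ i = 0" if "i \<in> P" for i
      using orth[of "axis i 1"] that by (simp add: sum_axis_mult)
    show "(\<Sum>i\<in>b. x $ i) = 0" if "b \<in> B" for b
      using orth[of "char_vec b"] that by (simp add: sum_char_vec_mult)
  qed
qed

lemma CHAR_eq_prime_CARD:
  assumes "CARD('a::field) = p" "prime p"
  shows "CHAR('a) = p"
  using CHAR_dvd_CARD[where 'a='a] CHAR_not_1[where 'a='a] assms by (auto simp: prime_nat_iff)

lemma even_card_nonzero_if_sum_eq_0:
  fixes f :: "'b \<Rightarrow> 'a::field"
  assumes "CARD('a) = 2" "finite X" "(\<Sum>i\<in>X. f i) = 0"
  shows "even (card {i\<in>X. f i \<noteq> 0})"
proof -
  have "UNIV = {0, 1 :: 'a}"
    using assms(1) by (intro card_subset_eq[symmetric]) (auto intro: card_ge_0_finite)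
  then have one: "f i = 1" if "f i \<noteq> 0" for i
    using that by blast
  have "(\<Sum>i\<in>X. f i) = (\<Sum>i\<in>{i\<in>X. f i \<noteq> 0}. f i)"
    using assms(2) by (rule sum.mono_neutral_right) auto
  also have "\<dots> = (\<Sum>i\<in>{i\<in>X. f i \<noteq> 0}. 1)"
    using one by (intro sum.cong) auto
  also have "\<dots> = of_nat (card {i\<in>X. f i \<noteq> 0})"
    by simp
  finally have "of_nat (card {i\<in>X. f i \<noteq> 0}) = (0::'a)"
    using assms(3) by simp
  then show ?thesis
    using CHAR_eq_prime_CARD[OF assms(1)] by (simp add: of_nat_eq_0_iff_char_dvd)
qed

lemma card_image_neq_2_if_sum_eq_0:
  fixes f :: "'b \<Rightarrow> 'a::field"
  assumes "CHAR('a) = 3" "card X = 3" "(\<Sum>i\<in>X. f i) = 0"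
  shows "card (f ` X) \<noteq> 2"
proof -
  obtain x y z where X: "X = {x, y, z}" "x \<noteq> y" "y \<noteq> z" "x \<noteq> z"
    using assms(2) unfolding card_3_iff by blast
  have three: "3 * u = 0" for u :: 'a
    using of_nat_CHAR[where 'a='a] assms(1) by simp
  have "f x + f y + f z = 0"
    using assms(3) X by (simp add: add.assoc)
  then have "f z = - f x - f y" "f y = - f x - f z" "f x = - f y - f z"
    by (simp_all add: algebra_simps eq_neg_iff_add_eq_0)
  moreover have "- u - u = u" for u :: 'a
    using three[of u] by (simp add: algebra_simps numeral_3_eq_3)
  ultimately have "f x = f y \<longleftrightarrow> f y = f z" "f x = f y \<longleftrightarrow> f x = f z"
    by metis+
  then show ?thesis
    using X by (auto simp: card_insert_if)
qed

text \<open>Unspecified (THE of an empty predicate) when \<open>x = y\<close>.\<close>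
definition third :: "'a set set \<Rightarrow> 'a \<Rightarrow> 'a \<Rightarrow> 'a" where
  "third B x y = (THE z. z \<noteq> x \<and> z \<noteq> y \<and> {x, y, z} \<in> B)"

definition subsystem :: "'a set set \<Rightarrow> 'a set \<Rightarrow> bool" where
  "subsystem B D \<longleftrightarrow> (\<forall>x\<in>D. \<forall>y\<in>D. x \<noteq> y \<longrightarrow> third B x y \<in> D)"

definition even_set :: "'a set set \<Rightarrow> 'a set \<Rightarrow> bool" where
  "even_set B S \<longleftrightarrow> (\<forall>b\<in>B. even (card (b \<inter> S)))"

text \<open>On blocks of three points, \<open>card (col ` b) \<noteq> 2\<close> says that \<open>b\<close> is monochromatic or rainbow.\<close>
definition mono_or_rainbow :: "'a set set \<Rightarrow> ('a \<Rightarrow> 'c) \<Rightarrow> bool" where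
  "mono_or_rainbow B col \<longleftrightarrow> (\<forall>b\<in>B. card (col ` b) \<noteq> 2)"

lemma sts_ex1_third:
  assumes sts: "steiner_triple_system B" and "x \<noteq> y"
  shows "\<exists>!z. z \<noteq> x \<and> z \<noteq> y \<and> {x, y, z} \<in> B"
proof -
  obtain b where b: "b \<in> B" "{x, y} \<subseteq> b" and unique: "\<And>b'. b' \<in> B \<Longrightarrow> {x, y} \<subseteq> b' \<Longrightarrow> b' = b"
    using assms unfolding steiner_triple_system_def by metis
  have "card b = 3"
    using sts b(1) unfolding steiner_triple_system_def by blast
  then have "card (b - {x, y}) = 1"
    using b(2) \<open>x \<noteq> y\<close> by (simp add: card_Diff_subset)
  then obtain z where "b - {x, y} = {z}"
    by (auto simp: card_1_singleton_iff)
  then have z: "b = {x, y, z}" "z \<noteq> x" "z \<noteq> y"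
    using b(2) by auto
  show ?thesis
  proof (rule ex1I[of _ z])
    show "z \<noteq> x \<and> z \<noteq> y \<and> {x, y, z} \<in> B"
      using z b(1) by simp
    fix z' assume "z' \<noteq> x \<and> z' \<noteq> y \<and> {x, y, z'} \<in> B"
    then show "z' = z"
      using unique[of "{x, y, z'}"] z by auto
  qed
qed

lemma sts_third:
  assumes "steiner_triple_system B" "x \<noteq> y"
  shows "third B x y \<noteq> x" "third B x y \<noteq> y" "{x, y, third B x y} \<in> B"
  using theI'[OF sts_ex1_third[OF assms]] unfolding third_def by auto

lemma sts_third_eqI:
  assumes sts: "steiner_triple_system B" and "z \<noteq> x" "z \<noteq> y" "{x, y, z} \<in> B"
  shows "third B x y = z"
proof -
  have "card {x, y, z} = 3"
    using sts assms(4) unfolding steiner_triple_system_def by blast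
  then have "x \<noteq> y"
    by (auto simp: card_insert_if split: if_splits)
  then show ?thesis
    using assms unfolding third_def by (intro the1_equality sts_ex1_third) auto
qed

lemma sts_third_third:
  assumes "steiner_triple_system B" "x \<noteq> y"
  shows "third B x (third B x y) = y"
  using sts_third[OF assms] assms by (intro sts_third_eqI) (auto simp: insert_commute)

lemma card_eq_if_third_swaps:
  assumes sts: "steiner_triple_system B" and p: "p \<notin> Y" "p \<notin> Z"
    and "\<And>y. y \<in> Y \<Longrightarrow> third B p y \<in> Z" "\<And>z. z \<in> Z \<Longrightarrow> third B p z \<in> Y"
  shows "card Y = card Z"
proof -
  have "third B p (third B p y) = y" if "y \<in> Y \<union> Z" for y
    using that p sts_third_third[OF sts, of p y] by blast
  then have "bij_betw (third B p) Y Z"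
    using assms(4,5) by (intro bij_betw_byWitness[where f' = "third B p"]) auto
  then show ?thesis
    by (rule bij_betw_same_card)
qed

lemma even_set_third_iff:
  assumes sts: "steiner_triple_system B" and even: "even_set B S" and "x \<noteq> y"
  shows "third B x y \<in> S \<longleftrightarrow> (x \<in> S \<longleftrightarrow> y \<notin> S)"
proof -
  define z where "z = third B x y"
  have "z \<noteq> x" "z \<noteq> y" "even (card ({x, y, z} \<inter> S))"
    using sts_third[OF sts \<open>x \<noteq> y\<close>] even unfolding z_def even_set_def by auto
  then show ?thesis
    unfolding z_def[symmetric] using \<open>x \<noteq> y\<close>
    by (cases "x \<in> S"; cases "y \<in> S"; cases "z \<in> S") simp_all
qed

lemma mono_or_rainbow_third_eq_iff:
  assumes sts: "steiner_triple_system B" and colouring: "mono_or_rainbow B col" and "x \<noteq> y"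
  shows "col (third B x y) = col x \<longleftrightarrow> col x = col y"
    and "col (third B x y) = col y \<longleftrightarrow> col x = col y"
proof -
  define z where "z = third B x y"
  have "card (col ` {x, y, z}) \<noteq> 2"
    using sts_third(3)[OF sts \<open>x \<noteq> y\<close>] colouring unfolding z_def mono_or_rainbow_def by blast
  then have "card {col x, col y, col z} \<noteq> 2"
    by simp
  then have "(col z = col x \<longleftrightarrow> col x = col y) \<and> (col z = col y \<longleftrightarrow> col x = col y)"
    by (cases "col x = col y"; cases "col z = col x"; cases "col z = col y")
      (simp_all add: card_insert_if)
  then show "col z = col x \<longleftrightarrow> col x = col y" "col z = col y \<longleftrightarrow> col x = col y"
    by simp_all
qed

lemma subsystem_UNIV: "subsystem B UNIV"
  unfolding subsystem_def by blast

lemma subsystem_colour_class: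
  assumes "steiner_triple_system B" "mono_or_rainbow B col"
  shows "subsystem B (col -` {k})"
  using mono_or_rainbow_third_eq_iff(1)[OF assms] unfolding subsystem_def by auto

lemma card_even_set_Int_subsystem:
  assumes sts: "steiner_triple_system B" and even: "even_set B S"
    and D: "subsystem B D" and s: "s \<in> S \<inter> D"
  shows "card (S \<inter> D) = Suc (card (D - S))"
proof -
  have "card (S \<inter> D - {s}) = card (D - S)"
  proof (rule card_eq_if_third_swaps[OF sts, of s])
    show "s \<notin> S \<inter> D - {s}" "s \<notin> D - S"
      using s by auto
    show "third B s y \<in> D - S" if y: "y \<in> S \<inter> D - {s}" for y
    proof -
      have "s \<noteq> y"
        using y by blast
      then have "third B s y \<in> D"
        using D s y unfolding subsystem_def by blast
      moreover have "third B s y \<notin> S"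
        using s y even_set_third_iff[OF sts even \<open>s \<noteq> y\<close>] by simp
      ultimately show ?thesis
        by blast
    qed
    show "third B s z \<in> S \<inter> D - {s}" if z: "z \<in> D - S" for z
    proof -
      have "s \<noteq> z"
        using s z by blast
      then have "third B s z \<in> D"
        using D s z unfolding subsystem_def by blast
      moreover have "third B s z \<in> S"
        using s z even_set_third_iff[OF sts even \<open>s \<noteq> z\<close>] by simp
      ultimately show ?thesis
        using sts_third(1)[OF sts \<open>s \<noteq> z\<close>] by blast
    qed
  qed
  then show ?thesis
    using s card.remove[of "S \<inter> D" s] by simp
qed

lemma card_colour_classes_eq:
  assumes sts: "steiner_triple_system B" and colouring: "mono_or_rainbow B col"
    and colours: "range col \<subseteq> {a, b, c}" and p: "col p = a" "a \<noteq> b" "a \<noteq> c"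
  shows "card (col -` {b}) = card (col -` {c})"
proof -
  have third_colour: "col (third B p y) \<in> {a, b, c} - {a, col y}" if "col y \<noteq> a" for y
  proof -
    have "p \<noteq> y"
      using that p by blast
    then have "col (third B p y) \<noteq> a" "col (third B p y) \<noteq> col y"
      using that p mono_or_rainbow_third_eq_iff[OF sts colouring \<open>p \<noteq> y\<close>] by auto
    moreover have "col (third B p y) \<in> {a, b, c}"
      using colours by blast
    ultimately show ?thesis
      by blast
  qed
  show ?thesis
  proof (rule card_eq_if_third_swaps[OF sts, of p])
    show "p \<notin> col -` {b}" "p \<notin> col -` {c}"
      using p by auto
    show "third B p y \<in> col -` {c}" if "y \<in> col -` {b}" for y
      using that p third_colour[of y] by auto
    show "third B p y \<in> col -` {b}" if "y \<in> col -` {c}" for y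
      using that p third_colour[of y] by auto
  qed
qed

lemma card_partition_by_colours:
  fixes col :: "'a \<Rightarrow> 'c"
  assumes "finite X" "range col = {a, b, c}" "a \<noteq> b" "a \<noteq> c" "b \<noteq> c"
  shows "card X = card (X \<inter> col -` {a}) + card (X \<inter> col -` {b}) + card (X \<inter> col -` {c})"
proof -
  have "card X = card (\<Union>k\<in>range col. X \<inter> col -` {k})"
    by (rule arg_cong[of _ _ card]) blast
  also have "\<dots> = (\<Sum>k\<in>range col. card (X \<inter> col -` {k}))"
    using assms(1,2) by (intro card_UN_disjoint) auto
  finally show ?thesis
    using assms(2-) by simp
qed

lemma mono_or_rainbow_three_colours:
  fixes col :: "'n::finite \<Rightarrow> 'c"
  assumes sts: "steiner_triple_system B" and colouring: "mono_or_rainbow B col"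
    and "card (range col) \<le> 3" and "col p \<noteq> col q"
  defines "r \<equiv> third B p q"
  shows "range col = {col p, col q, col r}" and "col p \<noteq> col r" "col q \<noteq> col r"
proof -
  have "p \<noteq> q"
    using \<open>col p \<noteq> col q\<close> by blast
  then show distinct: "col p \<noteq> col r" "col q \<noteq> col r"
    using mono_or_rainbow_third_eq_iff[OF sts colouring \<open>p \<noteq> q\<close>] \<open>col p \<noteq> col q\<close>
    unfolding r_def by auto
  show "range col = {col p, col q, col r}"
  proof (rule card_subset_eq[symmetric])
    show "{col p, col q, col r} \<subseteq> range col"
      by blast
    then show "card {col p, col q, col r} = card (range col)"
      using card_mono[of "range col" "{col p, col q, col r}"] assms(3,4) distinct by simp
  qed simp
qed

theorem sts_even_set_colouring_card_le_3:
  fixes B :: "'n::finite set set" and col :: "'n \<Rightarrow> 'c"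
  assumes sts: "steiner_triple_system B" and even: "even_set B S" and "S \<noteq> {}"
    and colouring: "mono_or_rainbow B col" and "card (range col) \<le> 3" and "col p \<noteq> col q"
  shows "CARD('n) \<le> 3"
proof -
  define r where "r = third B p q"
  have colours: "range col = {col p, col q, col r}"
    and distinct: "col p \<noteq> col q" "col p \<noteq> col r" "col q \<noteq> col r"
    using mono_or_rainbow_three_colours[OF sts colouring assms(5,6)] assms(6) unfolding r_def by auto
  define C where "C k = col -` {k}" for k
  have class_size: "card (C (col q)) = card (C (col p))" "card (C (col r)) = card (C (col p))"
    using card_colour_classes_eq[OF sts colouring, where p = r and b = "col q" and c = "col p"]
      card_colour_classes_eq[OF sts colouring, where p = q and b = "col r" and c = "col p"]
      colours distinct
    unfolding C_def by auto
  have S_size: "card S = Suc (card (- S))"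
    using card_even_set_Int_subsystem[OF sts even subsystem_UNIV] \<open>S \<noteq> {}\<close>
    by (auto simp: Compl_eq_Diff_UNIV)
  have S_class: "card (S \<inter> C k) = 0 \<or> card (S \<inter> C k) = Suc (card (- S \<inter> C k))" for k
  proof (cases "S \<inter> C k = {}")
    case False
    then obtain s where "s \<in> S \<inter> col -` {k}"
      unfolding C_def by blast
    then have "card (S \<inter> C k) = Suc (card (C k - S))"
      unfolding C_def by (rule card_even_set_Int_subsystem[OF sts even subsystem_colour_class[OF sts colouring]])
    then show ?thesis
      by (simp add: Diff_eq Int_commute)
  qed simp
  have class_split: "card (C k) = card (S \<inter> C k) + card (- S \<inter> C k)" for k
    using card_Int_Diff[of "C k" S] by (simp add: Diff_eq Int_commute)
  note colour_split = card_partition_by_colours[OF finite colours distinct, folded C_def]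
  have "CARD('n) = card (C (col p)) + card (C (col q)) + card (C (col r))"
    using colour_split[of UNIV] by simp
  then show ?thesis
    using colour_split[of S] colour_split[of "- S"] S_size class_size
      S_class[of "col p"] S_class[of "col q"] S_class[of "col r"]
      class_split[of "col p"] class_split[of "col q"] class_split[of "col r"]
    by arith
qed

lemma even_set_if_block_sums_eq_0:
  fixes f :: "'n::finite \<Rightarrow> 'a::field"
  assumes "CARD('a) = 2" "\<And>b. b \<in> B \<Longrightarrow> (\<Sum>i\<in>b. f i) = 0"
  shows "even_set B {i. f i \<noteq> 0}"
  using even_card_nonzero_if_sum_eq_0[OF assms(1) finite assms(2)]
  unfolding even_set_def by (simp add: Int_def)

lemma mono_or_rainbow_if_block_sums_eq_0:
  fixes f :: "'n::finite \<Rightarrow> 'a::field"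
  assumes "steiner_triple_system B" "CARD('a) = 3" "\<And>b. b \<in> B \<Longrightarrow> (\<Sum>i\<in>b. f i) = 0"
  shows "mono_or_rainbow B f"
proof -
  have "card b = 3" if "b \<in> B" for b
    using assms(1) that unfolding steiner_triple_system_def by blast
  then show ?thesis
    using card_image_neq_2_if_sum_eq_0[OF CHAR_eq_prime_CARD[OF assms(2)] _ assms(3)]
    unfolding mono_or_rainbow_def by simp
qed

theorem proposition3:
  fixes B :: "'n::finite set set"
  assumes "steiner_triple_system B"
    and "CARD('n) > 3"
    and "CARD('f2::field) = 2"
    and "CARD('f3::field) = 3"
  shows "\<not> (rank_over TYPE('f2) B < CARD('n) \<and> rank_over TYPE('f3) B < CARD('n) - 1)"
proof
  assume ranks: "rank_over TYPE('f2) B < CARD('n) \<and> rank_over TYPE('f3) B < CARD('n) - 1"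
  \<comment> \<open>an arbitrary point: the slack of 1 in the 3-rank lets the GF(3) vector vanish at \<open>p\<close>,
    which makes it non-constant\<close>
  fix p :: 'n
  have "rank_over TYPE('f2) B + card {} < CARD('n)" "rank_over TYPE('f3) B + card {p} < CARD('n)"
    using ranks by auto
  then obtain x2 :: "'f2 ^ 'n" and x3 :: "'f3 ^ 'n"
    where "x2 \<noteq> 0" and x2_blocks: "\<And>b. b \<in> B \<Longrightarrow> (\<Sum>i\<in>b. x2 $ i) = 0"
      and "x3 \<noteq> 0" "x3 $ p = 0" and x3_blocks: "\<And>b. b \<in> B \<Longrightarrow> (\<Sum>i\<in>b. x3 $ i) = 0"
    using rank_over_less_obtain_orthogonal by (metis empty_iff singletonI)
  have "even_set B {i. x2 $ i \<noteq> 0}"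
    using even_set_if_block_sums_eq_0[OF assms(3) x2_blocks] .
  moreover have "{i. x2 $ i \<noteq> 0} \<noteq> {}"
    using \<open>x2 \<noteq> 0\<close> by (auto simp: vec_eq_iff)
  moreover have "mono_or_rainbow B (($) x3)"
    using mono_or_rainbow_if_block_sums_eq_0[OF assms(1,4) x3_blocks] .
  moreover have "card (range (($) x3)) \<le> 3"
    using card_mono[of "UNIV :: 'f3 set" "range (($) x3)"] assms(4) card_ge_0_finite by force
  moreover obtain q where "x3 $ p \<noteq> x3 $ q"
    using \<open>x3 \<noteq> 0\<close> \<open>x3 $ p = 0\<close> by (metis vec_eq_iff zero_index)
  ultimately have "CARD('n) \<le> 3"
    by (intro sts_even_set_colouring_card_le_3[OF assms(1)])
  with assms(2) show False
    by simp
qed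

end
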